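(* Under the GoTrim-with-GoRank setting described in the context, for every node $k\in[n]$ and every $t\ge 1$, $$\big|\mathbb{E}[W_k(t)]-w_{n,\alpha}(r_k)\big|\le \frac{3}{c\,t}\cdot\frac{\sigma_k^2}{\gamma_k^2\,(1-2\alpha)},$$ where $c=\lambda_2/|E|$, $\sigma_k=n^{3/2}\sqrt{u_k(1-u_k)}$ with $u_k=(r_k-1)/n$, and $\gamma_k=\min(|r_k-a|,|r_k-b|)$ with $a=\lfloor\alpha n\rfloor+\tfrac12$, $b=n-\lfloor\alpha n\rfloor+\tfrac12$ (note $\gamma_k\ge 1/2$).
   Context: Let $n\ge 2$ and let $\mathcal G=(V,E)$ be a connected, non-bipartite, undirected graph with vertex set $V=[n]$; $\mathbf{L}=\mathbf{D}-\mathbf{A}$ is its Laplacian and $\lambda_2>0$ the second smallest eigenvalue of $\mathbf{L}$. Node $k$ holds a real observation $X_k$, pairwise distinct, with rank $r_k=1+\sum_{l}\mathbb{I}_{\{X_k>X_l\}}$. Fix $\alpha\in(0,1/2)$, let $m=\lfloor\alpha n\rfloor$ and $I_{n,\alpha}=[m+\tfrac12,\,n-m+\tfrac12]$, and define $w_{n,\alpha}(x)=\frac{n}{n-2m}\,\mathbb{I}_{\{x\in I_{n,\alpha}\}}$ for real $x$. Algorithm GoTrim paired with GoRank: initialize $Y_k(0)=X_k$, $R'_k(0)=0$, $Z_k(0)=0$, $W_k(0)=0$. At each iteration $s=1,2,\dots$: (i) every node $k$ sets $R'_k(s)=(1-1/s)R'_k(s-1)+(1/s)\mathbb{I}_{\{X_k>Y_k(s-1)\}}$,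 $R_k(s)=nR'_k(s)+1$, $W_k(s)=w_{n,\alpha}(R_k(s))$, and $\tilde Z_k(s)=Z_k(s-1)+(W_k(s)-W_k(s-1))X_k$; (ii) an edge $(i,j)$ is drawn uniformly at random from $E$, independently of the past; (iii) $Z_i(s)=Z_j(s)=(\tilde Z_i(s)+\tilde Z_j(s))/2$ and $Z_l(s)=\tilde Z_l(s)$ for $l\notin\{i,j\}$; and $Y_i(s)=Y_j(s-1)$, $Y_j(s)=Y_i(s-1)$, other $Y_l$ unchanged. Expectations are over the edge sampling. *)

theory Defs
  imports "HOL-Analysis.Analysis" "HOL-Library.FuncSet"
begin

(* Graph: vertex set = UNIV of a finite type 'n (so n = CARD('n)),
   undirected edges = 2-element subsets of the vertex set. *)

definition adj :: "'n set set \<Rightarrow> 'n \<Rightarrow> 'n \<Rightarrow> bool" where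
  "adj E i j \<longleftrightarrow> {i, j} \<in> E"

definition simple_graph :: "'n set set \<Rightarrow> bool" where
  "simple_graph E \<longleftrightarrow> (\<forall>e\<in>E. card e = 2)"

definition connected_graph :: "'n set set \<Rightarrow> bool" where
  "connected_graph E \<longleftrightarrow> (\<forall>i j. (adj E)\<^sup>*\<^sup>* i j)"

definition bipartite :: "'n set set \<Rightarrow> bool" where
  "bipartite E \<longleftrightarrow> (\<exists>S. \<forall>e\<in>E. card (e \<inter> S) = 1)"

definition adjacency_matrix :: "('n::finite) set set \<Rightarrow> real^'n^'n" where
  "adjacency_matrix E = (\<chi> i j. if {i, j} \<in> E then 1 else 0)"

definition degree_matrix :: "('n::finite) set set \<Rightarrow> real^'n^'n" where
  "degree_matrix E = (\<chi> i j. if i = j then real (card {l. {i, l} \<in> E}) else 0)"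

definition laplacian :: "('n::finite) set set \<Rightarrow> real^'n^'n" where
  "laplacian E = degree_matrix E - adjacency_matrix E"

definition eigenvalues :: "real^'n^'n \<Rightarrow> real set" where
  "eigenvalues M = {\<mu>. \<exists>x. x \<noteq> 0 \<and> M *v x = \<mu> *\<^sub>R x}"

definition eigenspace :: "real^'n^'n \<Rightarrow> real \<Rightarrow> (real^'n) set" where
  "eigenspace M \<mu> = {x. M *v x = \<mu> *\<^sub>R x}"

(* second smallest eigenvalue of a (symmetric) matrix, counted with multiplicity
   (for symmetric matrices geometric = algebraic multiplicity) *)
definition second_smallest_eigenvalue :: "real^'n^'n \<Rightarrow> real" where
  "second_smallest_eigenvalue M =
     (let m = Min (eigenvalues M) in
      if dim (eigenspace M m) \<ge> 2 then m else Min {\<mu>\<in>eigenvalues M. \<mu> > m})"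

definition obs_rank :: "('n::finite \<Rightarrow> real) \<Rightarrow> 'n \<Rightarrow> nat" where
  "obs_rank X k = 1 + card {l. X k > X l}"

definition trim_weight :: "nat \<Rightarrow> real \<Rightarrow> real \<Rightarrow> real" where
  "trim_weight n \<alpha> x =
     (let m = real (nat \<lfloor>\<alpha> * real n\<rfloor>) in
      if m + 1/2 \<le> x \<and> x \<le> real n - m + 1/2 then real n / (real n - 2 * m) else 0)"

(* state (R', Z, W, Y) of GoTrim+GoRank *)
type_synonym 'n gstate = "('n \<Rightarrow> real) \<times> ('n \<Rightarrow> real) \<times> ('n \<Rightarrow> real) \<times> ('n \<Rightarrow> real)"

definition gotrim_step ::
  "('n::finite \<Rightarrow> real) \<Rightarrow> real \<Rightarrow> nat \<Rightarrow> 'n set \<Rightarrow> 'n gstate \<Rightarrow> 'n gstate" where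
  "gotrim_step X \<alpha> s e st =
     (case st of (R', Z, W, Y) \<Rightarrow>
       let n = CARD('n);
           R'n = (\<lambda>k. (1 - 1 / real s) * R' k + (1 / real s) * (if X k > Y k then 1 else 0));
           Wn = (\<lambda>k. trim_weight n \<alpha> (real n * R'n k + 1));
           Zt = (\<lambda>k. Z k + (Wn k - W k) * X k);
           Zn = (\<lambda>l. if l \<in> e then (\<Sum>i\<in>e. Zt i) / 2 else Zt l);
           Yn = (\<lambda>l. if l \<in> e then Y (the_elem (e - {l})) else Y l)
       in (R'n, Zn, Wn, Yn))"

primrec gotrim_state ::
  "('n::finite \<Rightarrow> real) \<Rightarrow> real \<Rightarrow> (nat \<Rightarrow> 'n set) \<Rightarrow> nat \<Rightarrow> 'n gstate" where
  "gotrim_state X \<alpha> es 0 = ((\<lambda>_. 0), (\<lambda>_. 0), (\<lambda>_. 0), X)"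
| "gotrim_state X \<alpha> es (Suc s) = gotrim_step X \<alpha> (Suc s) (es (Suc s)) (gotrim_state X \<alpha> es s)"

definition W_at :: "('n::finite \<Rightarrow> real) \<Rightarrow> real \<Rightarrow> (nat \<Rightarrow> 'n set) \<Rightarrow> nat \<Rightarrow> 'n \<Rightarrow> real" where
  "W_at X \<alpha> es t k = fst (snd (snd (gotrim_state X \<alpha> es t))) k"

(* E[W_k(t)]: edges e_1..e_t i.i.d. uniform on E, i.e. uniform average over E^t *)
definition expected_W :: "('n::finite) set set \<Rightarrow> ('n \<Rightarrow> real) \<Rightarrow> real \<Rightarrow> nat \<Rightarrow> 'n \<Rightarrow> real" where
  "expected_W E X \<alpha> t k =
     (\<Sum>es\<in>Pi\<^sub>E {1..t} (\<lambda>_. E). W_at X \<alpha> es t k) / real (card E) ^ t"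

end

(*
  GoRank estimates the rank of node k after t steps by R = r + n S\<^sub>t / t, where
  S\<^sub>t = \<Sum>j<t. g (Y\<^sub>j k) for the centred indicator g y = [X k > y] - u and the swap walk Y.
  The trimmed weight of R differs from that of r only if an endpoint of I_{n,\<alpha>} separates them,
  and then |R - r| \<ge> \<gamma>; so by Chebyshev the error is at most n\<^sup>2 E[S\<^sub>t\<^sup>2] / (t\<^sup>2 \<gamma>\<^sup>2 (1 - 2\<alpha>)).
  Averaging one random swap applies P = I - L/|E| to H\<^sub>j = g \<circ> Y\<^sub>j, and P contracts the
  hyperplane orthogonal to 1 by the factor 1 - c (connectedness gives c > 0; non-bipartiteness gives
  n \<le> |E|, hence P \<ge> 0 there). So the cross moments V\<^sub>t = E[S\<^sub>t H\<^sub>t] satisfy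
  V\<^sub>t\<^sub>+\<^sub>1 = P (V\<^sub>t + E[g (Y\<^sub>t k) H\<^sub>t]) and stay bounded by \<parallel>g\<parallel>\<^sup>2 (1 - c) / c, while
  E[S\<^sub>t\<^sup>2] grows by 2 V\<^sub>t k + E[g (Y\<^sub>t k)\<^sup>2] \<le> 3 \<parallel>g\<parallel>\<^sup>2 / c per step, where \<parallel>g\<parallel>\<^sup>2 = n u (1 - u).
*)
theory Submission
  imports Defs
begin

section \<open>The graph Laplacian\<close>

definition edge_sum :: "'n::finite set set \<Rightarrow> ('n \<Rightarrow> 'n \<Rightarrow> real) \<Rightarrow> real" where
  "edge_sum E f = (\<Sum>i\<in>UNIV. \<Sum>j\<in>UNIV. if {i, j} \<in> E then f i j else 0)"

lemma edge_sum_swap: "edge_sum E f = edge_sum E (\<lambda>i j. f j i)"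
  unfolding edge_sum_def by (subst sum.swap) (simp add: insert_commute)

lemma edge_sum_add: "edge_sum E (\<lambda>i j. f i j + g i j) = edge_sum E f + edge_sum E g"
  unfolding edge_sum_def by (simp add: sum.distrib[symmetric] if_distrib cong: if_cong)

lemma edge_sum_nonneg: "(\<And>i j. 0 \<le> f i j) \<Longrightarrow> 0 \<le> edge_sum E f"
  unfolding edge_sum_def by (intro sum_nonneg) auto

lemma laplacian_mult_nth:
  "(laplacian E *v x) $ i = (\<Sum>j\<in>UNIV. if {i, j} \<in> E then x $ i - x $ j else 0)"
  unfolding laplacian_def degree_matrix_def adjacency_matrix_def matrix_vector_mult_def
  by (simp add: left_diff_distrib sum_subtractf if_distrib[of "\<lambda>a. a * _"] sum.If_cases
      cong: if_cong)

lemma inner_laplacian: "y \<bullet> (laplacian E *v x) = edge_sum E (\<lambda>i j. y $ i * (x $ i - x $ j))"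
  unfolding edge_sum_def inner_vec_def laplacian_mult_nth
  by (simp add: sum_distrib_left if_distrib cong: if_cong)

lemma laplacian_symmetric: "y \<bullet> (laplacian E *v x) = x \<bullet> (laplacian E *v y)"
proof -
  have "y \<bullet> (laplacian E *v x) - x \<bullet> (laplacian E *v y)
      = edge_sum E (\<lambda>i j. x $ i * y $ j) - edge_sum E (\<lambda>i j. y $ i * x $ j)"
    unfolding inner_laplacian
    by (simp add: right_diff_distrib edge_sum_def sum_subtractf[symmetric] if_distrib cong: if_cong)
  also have "\<dots> = 0"
    by (subst edge_sum_swap) (simp add: mult.commute)
  finally show ?thesis by simp
qed

lemma laplacian_quadratic_form:
  "2 * (x \<bullet> (laplacian E *v x)) = edge_sum E (\<lambda>i j. (x $ i - x $ j)^2)"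
proof -
  have "x \<bullet> (laplacian E *v x) = edge_sum E (\<lambda>i j. x $ j * (x $ j - x $ i))"
    by (subst inner_laplacian, subst edge_sum_swap) simp
  then have "2 * (x \<bullet> (laplacian E *v x))
      = edge_sum E (\<lambda>i j. x $ i * (x $ i - x $ j)) + edge_sum E (\<lambda>i j. x $ j * (x $ j - x $ i))"
    by (simp add: inner_laplacian)
  then show ?thesis
    by (simp add: edge_sum_add[symmetric] power2_eq_square algebra_simps)
qed

lemma laplacian_quadratic_nonneg: "0 \<le> x \<bullet> (laplacian E *v x)"
  using laplacian_quadratic_form[of x E] edge_sum_nonneg[of "\<lambda>i j. (x $ i - x $ j)^2" E] by simp

lemma laplacian_quadratic_le: "x \<bullet> (laplacian E *v x) \<le> real CARD('n) * (x \<bullet> x)"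
  for x :: "real^'n::finite"
proof -
  have "2 * (x \<bullet> (laplacian E *v x)) \<le> (\<Sum>i\<in>UNIV. \<Sum>j\<in>UNIV. (x $ i - x $ j)^2)"
    unfolding laplacian_quadratic_form edge_sum_def by (intro sum_mono) auto
  also have "\<dots> = 2 * real CARD('n) * (x \<bullet> x) - 2 * (\<Sum>i\<in>UNIV. x $ i)^2"
    by (simp add: inner_vec_def power2_diff sum.distrib sum_subtractf sum_distrib_left
        sum_distrib_right power2_eq_square algebra_simps)
  finally show ?thesis
    using zero_le_power2[of "\<Sum>i\<in>UNIV. x $ i"] by linarith
qed

lemma laplacian_one: "laplacian E *v 1 = 0"
  by (simp add: vec_eq_iff laplacian_mult_nth cong: if_cong)

lemma one_inner_laplacian: "1 \<bullet> (laplacian E *v x) = 0"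
  by (subst laplacian_symmetric) (simp add: laplacian_one)

lemma connected_graph_const:
  assumes "connected_graph E" and "\<And>i j. {i, j} \<in> E \<Longrightarrow> f i = f j"
  shows "f a = f b"
proof -
  have "(adj E)\<^sup>*\<^sup>* a b"
    using assms(1) unfolding connected_graph_def by blast
  then show ?thesis
    by (induction rule: rtranclp_induct) (auto simp: adj_def dest: assms(2))
qed

lemma laplacian_quadratic_eq_0_imp_const:
  assumes "connected_graph E" and "x \<bullet> (laplacian E *v x) = 0"
  shows "x = x $ a *\<^sub>R 1"
proof -
  have "x $ i = x $ j" if "{i, j} \<in> E" for i j
  proof -
    let ?d = "\<lambda>i j. if {i, j} \<in> E then (x $ i - x $ j)^2 else 0"
    have "?d i j \<le> (\<Sum>j\<in>UNIV. ?d i j)"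
      by (rule member_le_sum) auto
    also have "\<dots> \<le> (\<Sum>i\<in>UNIV. \<Sum>j\<in>UNIV. ?d i j)"
      by (rule member_le_sum) (auto intro: sum_nonneg)
    also have "\<dots> = 0"
      using laplacian_quadratic_form[of x E] assms(2) by (simp add: edge_sum_def)
    finally show ?thesis
      using that by simp
  qed
  then have "x $ i = x $ a" for i
    using connected_graph_const[OF assms(1), of "\<lambda>i. x $ i"] by blast
  then show ?thesis
    by (simp add: vec_eq_iff)
qed

lemma edge_antisymmetric_imp_bipartite:
  fixes y :: "'n \<Rightarrow> real"
  assumes "simple_graph E" and "connected_graph E" and "y a \<noteq> 0"
    and antisym: "\<And>i j. {i, j} \<in> E \<Longrightarrow> y i + y j = 0"
  shows "bipartite E"
  unfolding bipartite_def
proof (intro exI ballI)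
  fix e
  assume "e \<in> E"
  then obtain i j where ij: "i \<noteq> j" "e = {i, j}"
    using assms(1) unfolding simple_graph_def card_2_iff by blast
  have "\<bar>y i\<bar> = \<bar>y a\<bar>"
    by (rule connected_graph_const[OF assms(2)]) (force dest: antisym)
  then have "y i \<noteq> 0" and "y j = - y i"
    using assms(3) antisym \<open>e \<in> E\<close> ij by (auto simp: add_eq_0_iff)
  then have "e \<inter> {l. y l > 0} = {i} \<or> e \<inter> {l. y l > 0} = {j}"
    using ij by auto
  then show "card (e \<inter> {l. y l > 0}) = 1"
    by auto
qed

text \<open>If the edge indicators did not span the whole space, a nonzero vector orthogonal to all of
  them would change sign along every edge and so 2-colour the graph.\<close>
lemma card_le_card_edges:
  fixes E :: "'n::finite set set"
  assumes "simple_graph E" and "connected_graph E" and "\<not> bipartite E"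
  shows "CARD('n) \<le> card E"
proof -
  define ind :: "'n set \<Rightarrow> real^'n" where "ind e = (\<chi> i. if i \<in> e then 1 else 0)" for e
  have "\<not> dim (ind ` E) < DIM(real^'n)"
  proof
    assume "dim (ind ` E) < DIM(real^'n)"
    then obtain y :: "real^'n" where "y \<noteq> 0" and y: "\<And>z. z \<in> span (ind ` E) \<Longrightarrow> orthogonal y z"
      using orthogonal_to_subspace_exists by metis
    then obtain a where "y $ a \<noteq> 0"
      by (auto simp: vec_eq_iff)
    have "y $ i + y $ j = 0" if "{i, j} \<in> E" for i j
    proof -
      have "i \<noteq> j"
        using that assms(1) by (force simp: simple_graph_def)
      have "orthogonal y (ind {i, j})"
        using that by (intro y span_base) auto
      then have "(\<Sum>l\<in>UNIV. if l \<in> {i, j} then y $ l else 0) = 0"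
        by (simp add: orthogonal_def inner_vec_def ind_def if_distrib[of "\<lambda>a. _ * a"] cong: if_cong)
      then show ?thesis
        using \<open>i \<noteq> j\<close> by (simp add: sum.If_cases Collect_disj_eq)
    qed
    then have "bipartite E"
      using edge_antisymmetric_imp_bipartite[OF assms(1,2), of "\<lambda>i. y $ i"] \<open>y $ a \<noteq> 0\<close> by blast
    with assms(3) show False ..
  qed
  then have "CARD('n) \<le> dim (ind ` E)"
    by simp
  also have "\<dots> \<le> card (ind ` E)"
    by (rule dim_le_card) (auto intro: span_base)
  also have "\<dots> \<le> card E"
    by (rule card_image_le) simp
  finally show ?thesis .
qed

section \<open>Spectral gap of a connected graph\<close>

lemma finite_eigenvalues_symmetric:
  fixes M :: "real^'n::finite^'n"
  assumes sym: "\<And>x y. y \<bullet> (M *v x) = x \<bullet> (M *v y)"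
  shows "finite (eigenvalues M)"
proof -
  define v where "v \<mu> = (SOME x. x \<noteq> 0 \<and> M *v x = \<mu> *\<^sub>R x)" for \<mu>
  have v: "v \<mu> \<noteq> 0" "M *v v \<mu> = \<mu> *\<^sub>R v \<mu>" if "\<mu> \<in> eigenvalues M" for \<mu>
    using someI_ex[of "\<lambda>x. x \<noteq> 0 \<and> M *v x = \<mu> *\<^sub>R x"] that
    unfolding eigenvalues_def v_def by auto
  have orth: "v \<mu> \<bullet> v \<nu> = 0"
    if "\<mu> \<in> eigenvalues M" "\<nu> \<in> eigenvalues M" "\<mu> \<noteq> \<nu>" for \<mu> \<nu>
  proof -
    have "\<mu> * (v \<nu> \<bullet> v \<mu>) = \<nu> * (v \<mu> \<bullet> v \<nu>)"
      using sym[of "v \<mu>" "v \<nu>"] v that by simp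
    then show ?thesis
      using that(3) by (simp add: inner_commute)
  qed
  have "inj_on v (eigenvalues M)"
    using orth v(1) by (metis inj_onI inner_eq_zero_iff)
  moreover have "finite (v ` eigenvalues M)"
    using orth
    by (intro pairwise_orthogonal_imp_finite) (fastforce simp: pairwise_def orthogonal_def)
  ultimately show ?thesis
    by (simp add: finite_image_iff)
qed

lemma rayleigh_minimum_exists:
  fixes M :: "real^'n::finite^'n" and S :: "(real^'n) set"
  assumes "subspace S" and "x\<^sub>0 \<in> S" and "x\<^sub>0 \<noteq> 0"
  obtains v where "v \<in> S" and "norm v = 1"
    and "\<And>x. x \<in> S \<Longrightarrow> (v \<bullet> (M *v v)) * (x \<bullet> x) \<le> x \<bullet> (M *v x)"
proof -
  let ?q = "\<lambda>x. x \<bullet> (M *v x)"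
  have "compact (sphere 0 1 \<inter> S)"
    by (intro compact_Int_closed compact_sphere closed_subspace assms(1))
  moreover have "x\<^sub>0 /\<^sub>R norm x\<^sub>0 \<in> sphere 0 1 \<inter> S"
    using assms by (simp add: subspace_scale)
  moreover have "continuous_on (sphere 0 1 \<inter> S) ?q"
    by (intro continuous_intros linear_continuous_on matrix_vector_mul_bounded_linear)
  ultimately obtain v where v: "v \<in> sphere 0 1 \<inter> S"
    and min: "\<And>y. y \<in> sphere 0 1 \<inter> S \<Longrightarrow> ?q v \<le> ?q y"
    using continuous_attains_inf[of "sphere 0 1 \<inter> S" ?q] by blast
  have rayleigh: "?q v * (x \<bullet> x) \<le> ?q x" if "x \<in> S" for x
  proof (cases "x = 0")
    case False
    have "?q v \<le> ?q (x /\<^sub>R norm x)"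
      using \<open>x \<in> S\<close> False assms(1) by (intro min) (simp add: subspace_scale)
    also have "\<dots> = ?q x / (x \<bullet> x)"
      by (simp add: matrix_vector_mult_scaleR power2_norm_eq_inner[symmetric] divide_inverse
          power2_eq_square)
    finally show ?thesis
      using False by (simp add: pos_le_divide_eq)
  qed simp
  show thesis
    by (rule that[of v]) (use v rayleigh in auto)
qed

lemma linear_plus_quadratic_nonneg_imp_zero:
  fixes a C :: real
  assumes "\<And>t. 0 \<le> t * a + t^2 * C"
  shows "a = 0"
proof (rule ccontr)
  assume "a \<noteq> 0"
  define d where "d = \<bar>C\<bar> + 1"
  define t where "t = - a / d"
  have "d > 0" and "t \<noteq> 0"
    using \<open>a \<noteq> 0\<close> by (auto simp: d_def t_def)
  have "t^2 * C < t^2 * d"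
    using \<open>t \<noteq> 0\<close> by (intro mult_strict_left_mono) (auto simp: d_def)
  also have "\<dots> = - (t * a)"
    using \<open>d > 0\<close> by (simp add: t_def power2_eq_square)
  finally show False
    using assms[of t] by simp
qed

text \<open>Perturbing a minimiser \<open>v\<close> of the Rayleigh quotient in the direction of the residual
  \<open>w = M v - q(v) v\<close> changes the quotient to first order by \<open>2 t \<parallel>w\<parallel>\<^sup>2\<close>.\<close>
lemma rayleigh_minimiser_eigenvector:
  fixes M :: "real^'n::finite^'n"
  assumes sym: "\<And>x y. y \<bullet> (M *v x) = x \<bullet> (M *v y)"
    and "subspace S" and invariant: "\<And>x. x \<in> S \<Longrightarrow> M *v x \<in> S"
    and "v \<in> S" and "v \<bullet> v = 1"
    and min: "\<And>x. x \<in> S \<Longrightarrow> (v \<bullet> (M *v v)) * (x \<bullet> x) \<le> x \<bullet> (M *v x)"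
  shows "M *v v = (v \<bullet> (M *v v)) *\<^sub>R v"
proof -
  define \<mu> where "\<mu> = v \<bullet> (M *v v)"
  define w where "w = M *v v - \<mu> *\<^sub>R v"
  have "w \<in> S"
    using assms(2,4) invariant by (simp add: w_def subspace_diff subspace_scale)
  have "0 \<le> t * (2 * (w \<bullet> w)) + t^2 * (w \<bullet> (M *v w) - \<mu> * (w \<bullet> w))" for t
  proof -
    have perturbed: "v + t *\<^sub>R w \<in> S"
      using assms(2,4) \<open>w \<in> S\<close> by (simp add: subspace_add subspace_scale)
    have "w \<bullet> w = w \<bullet> (M *v v - \<mu> *\<^sub>R v)"
      by (simp only: w_def[symmetric])
    then have residual: "w \<bullet> (M *v v) = w \<bullet> w + \<mu> * (v \<bullet> w)"
      by (simp add: inner_diff_right inner_commute)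
    from min[OF perturbed] have "\<mu> * (1 + 2 * t * (v \<bullet> w) + t^2 * (w \<bullet> w))
        \<le> \<mu> + 2 * t * (w \<bullet> w + \<mu> * (v \<bullet> w)) + t^2 * (w \<bullet> (M *v w))"
      using sym[of v w] \<open>v \<bullet> v = 1\<close> residual
      by (simp add: \<mu>_def matrix_vector_right_distrib matrix_vector_mult_scaleR inner_add_left
          inner_add_right inner_commute power2_eq_square algebra_simps)
    then show ?thesis
      by (simp add: power2_eq_square algebra_simps)
  qed
  then have "2 * (w \<bullet> w) = 0"
    by (rule linear_plus_quadratic_nonneg_imp_zero)
  then show ?thesis
    by (simp add: w_def \<mu>_def)
qed

lemma eigenvalues_laplacian_nonneg:
  assumes "\<mu> \<in> eigenvalues (laplacian E)"
  shows "0 \<le> \<mu>"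
proof -
  obtain x where "x \<noteq> 0" and "laplacian E *v x = \<mu> *\<^sub>R x"
    using assms unfolding eigenvalues_def by blast
  then have "0 \<le> \<mu> * (x \<bullet> x)"
    using laplacian_quadratic_nonneg[of x E] by simp
  moreover have "0 < x \<bullet> x"
    using \<open>x \<noteq> 0\<close> by simp
  ultimately show ?thesis
    by (simp add: zero_le_mult_iff)
qed

lemma second_smallest_eigenvalue_laplacian:
  assumes "connected_graph E"
  shows "second_smallest_eigenvalue (laplacian E) = Min {\<mu> \<in> eigenvalues (laplacian E). 0 < \<mu>}"
proof -
  have "0 \<in> eigenvalues (laplacian E)"
    unfolding eigenvalues_def using laplacian_one[of E]
    by (intro CollectI exI[of _ 1]) (simp add: vec_eq_iff)
  then have "Min (eigenvalues (laplacian E)) = 0"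
    using finite_eigenvalues_symmetric[OF laplacian_symmetric] eigenvalues_laplacian_nonneg
    by (intro Min_eqI) auto
  moreover have "eigenspace (laplacian E) 0 \<subseteq> span {1}"
  proof
    fix x
    assume "x \<in> eigenspace (laplacian E) 0"
    then have "x = x $ a *\<^sub>R 1" for a
      using laplacian_quadratic_eq_0_imp_const[OF assms] by (simp add: eigenspace_def)
    then show "x \<in> span {1}"
      by (metis span_base span_scale singletonI)
  qed
  then have "dim (eigenspace (laplacian E) 0) \<le> 1"
    using dim_subset[of "eigenspace (laplacian E) 0" "span {1}"] by simp
  ultimately show ?thesis
    by (simp add: second_smallest_eigenvalue_def Let_def)
qed

lemma exists_nonzero_orthogonal_one:
  assumes "2 \<le> CARD('n::finite)"
  obtains x :: "real^'n" where "x \<bullet> 1 = 0" and "x \<noteq> 0"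
proof -
  obtain a b :: 'n where "a \<noteq> b"
    using assms card_le_Suc0_iff_eq[of "UNIV :: 'n set"] by auto
  have "(axis a 1 - axis b 1) $ a = (1::real)"
    using \<open>a \<noteq> b\<close> by (simp add: axis_def)
  then have "axis a 1 - axis b (1::real) \<noteq> 0"
    by (metis zero_index zero_neq_one)
  moreover have "(axis a 1 - axis b 1) \<bullet> 1 = 0"
    by (simp add: inner_diff_left inner_axis')
  ultimately show thesis
    using that by blast
qed

lemma laplacian_quadratic_pos:
  fixes x :: "real^'n::finite"
  assumes "connected_graph E" and "x \<bullet> 1 = 0" and "x \<noteq> 0"
  shows "0 < x \<bullet> (laplacian E *v x)"
proof (rule ccontr)
  assume "\<not> 0 < x \<bullet> (laplacian E *v x)"
  then have "x \<bullet> (laplacian E *v x) = 0"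
    using laplacian_quadratic_nonneg[of x E] by simp
  then have const: "x = x $ a *\<^sub>R 1" for a
    by (rule laplacian_quadratic_eq_0_imp_const[OF assms(1)])
  have "x $ a * (1 \<bullet> (1 :: real^'n)) = 0" for a
    using assms(2) by (subst (asm) const[of a]) simp
  moreover have "1 \<bullet> (1 :: real^'n) \<noteq> 0"
    by (simp add: vec_eq_iff)
  ultimately have "x = 0"
    by (simp add: vec_eq_iff)
  with assms(3) show False ..
qed

lemma laplacian_min_eigenvalue_orthogonal_one:
  fixes E :: "'n::finite set set"
  assumes "connected_graph E" and "2 \<le> CARD('n)"
  obtains \<mu> where "\<mu> \<in> eigenvalues (laplacian E)" and "0 < \<mu>" and "\<mu> \<le> CARD('n)"
    and "\<And>x. x \<bullet> 1 = 0 \<Longrightarrow> \<mu> * (x \<bullet> x) \<le> x \<bullet> (laplacian E *v x)"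
proof -
  let ?S = "{x :: real^'n. x \<bullet> 1 = 0}"
  obtain x\<^sub>0 :: "real^'n" where "x\<^sub>0 \<in> ?S" and "x\<^sub>0 \<noteq> 0"
    using exists_nonzero_orthogonal_one[OF assms(2)] by blast
  then obtain v where "v \<in> ?S" and "norm v = 1"
    and min: "\<And>x. x \<in> ?S \<Longrightarrow> (v \<bullet> (laplacian E *v v)) * (x \<bullet> x) \<le> x \<bullet> (laplacian E *v x)"
    using rayleigh_minimum_exists[OF subspace_hyperplane2] by blast
  define \<mu> where "\<mu> = v \<bullet> (laplacian E *v v)"
  have "v \<bullet> v = 1" and "v \<noteq> 0"
    using \<open>norm v = 1\<close> by (auto simp: norm_eq_1)
  have "laplacian E *v v = \<mu> *\<^sub>R v"
    unfolding \<mu>_def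
  proof (rule rayleigh_minimiser_eigenvector[OF laplacian_symmetric subspace_hyperplane2 _ \<open>v \<in> ?S\<close>
        \<open>v \<bullet> v = 1\<close> min])
    show "laplacian E *v x \<in> ?S" for x
      by (simp add: inner_commute one_inner_laplacian)
  qed
  show thesis
  proof (rule that)
    show "\<mu> \<in> eigenvalues (laplacian E)"
      using \<open>laplacian E *v v = \<mu> *\<^sub>R v\<close> \<open>v \<noteq> 0\<close> unfolding eigenvalues_def by blast
    show "0 < \<mu>"
      using laplacian_quadratic_pos[OF assms(1)] \<open>v \<in> ?S\<close> \<open>v \<noteq> 0\<close> by (simp add: \<mu>_def)
    show "\<mu> \<le> CARD('n)"
      using laplacian_quadratic_le[of v E] \<open>v \<bullet> v = 1\<close> by (simp add: \<mu>_def)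
    show "\<mu> * (x \<bullet> x) \<le> x \<bullet> (laplacian E *v x)" if "x \<bullet> 1 = 0" for x
      using min[of x] that by (simp add: \<mu>_def)
  qed
qed

lemma laplacian_spectral_gap:
  fixes E :: "'n::finite set set"
  assumes "connected_graph E" and "2 \<le> CARD('n)"
  shows "0 < second_smallest_eigenvalue (laplacian E)"
    and "second_smallest_eigenvalue (laplacian E) \<le> CARD('n)"
    and "\<And>x. x \<bullet> 1 = 0 \<Longrightarrow>
      second_smallest_eigenvalue (laplacian E) * (x \<bullet> x) \<le> x \<bullet> (laplacian E *v x)"
proof -
  let ?pos = "{\<mu> \<in> eigenvalues (laplacian E). 0 < \<mu>}"
  obtain \<mu> where "\<mu> \<in> ?pos" and "\<mu> \<le> CARD('n)"
    and rayleigh: "\<And>x. x \<bullet> 1 = 0 \<Longrightarrow> \<mu> * (x \<bullet> x) \<le> x \<bullet> (laplacian E *v x)"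
    using laplacian_min_eigenvalue_orthogonal_one[OF assms] by blast
  have "finite ?pos"
    using finite_eigenvalues_symmetric[OF laplacian_symmetric[where E = E]]
    by (rule rev_finite_subset) auto
  then have "Min ?pos \<le> \<mu>" and "Min ?pos \<in> ?pos"
    using Min_le Min_in \<open>\<mu> \<in> ?pos\<close> by blast+
  moreover have gap: "second_smallest_eigenvalue (laplacian E) = Min ?pos"
    by (rule second_smallest_eigenvalue_laplacian[OF assms(1)])
  ultimately show "0 < second_smallest_eigenvalue (laplacian E)"
    and "second_smallest_eigenvalue (laplacian E) \<le> CARD('n)"
    using \<open>\<mu> \<le> CARD('n)\<close> by simp_all
  show "second_smallest_eigenvalue (laplacian E) * (x \<bullet> x) \<le> x \<bullet> (laplacian E *v x)"
    if "x \<bullet> 1 = 0" for x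
    using mult_right_mono[OF \<open>Min ?pos \<le> \<mu>\<close>, of "x \<bullet> x"] rayleigh[OF that] by (simp add: gap)
qed

section \<open>Swap walk and averages over edge sequences\<close>

definition edge_seqs :: "'n set set \<Rightarrow> nat \<Rightarrow> (nat \<Rightarrow> 'n set) set" where
  "edge_seqs E t = Pi\<^sub>E {1..t} (\<lambda>_. E)"

definition edge_avg :: "'n set set \<Rightarrow> nat \<Rightarrow> ((nat \<Rightarrow> 'n set) \<Rightarrow> 'a::real_vector) \<Rightarrow> 'a" where
  "edge_avg E t F = (1 / real (card E) ^ t) *\<^sub>R (\<Sum>es\<in>edge_seqs E t. F es)"

lemma expected_W_eq_edge_avg: "expected_W E X \<alpha> t k = edge_avg E t (\<lambda>es. W_at X \<alpha> es t k)"
  by (simp add: expected_W_def edge_avg_def edge_seqs_def)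

lemma sum_edge_seqs_Suc:
  "(\<Sum>es\<in>edge_seqs E (Suc t). F es) = (\<Sum>es\<in>edge_seqs E t. \<Sum>e\<in>E. F (es(Suc t := e)))"
proof -
  have "edge_seqs E (Suc t) = (\<lambda>(e, es). es(Suc t := e)) ` (E \<times> edge_seqs E t)"
    by (simp add: edge_seqs_def atLeastAtMostSuc_conv PiE_insert_eq)
  moreover have "inj_on (\<lambda>(e, es). es(Suc t := e)) (E \<times> edge_seqs E t)"
    unfolding edge_seqs_def by (rule inj_combinator) simp
  ultimately have "(\<Sum>es\<in>edge_seqs E (Suc t). F es)
      = (\<Sum>(e, es)\<in>E \<times> edge_seqs E t. F (es(Suc t := e)))"
    by (simp add: sum.reindex case_prod_unfold)
  then show ?thesis
    by (simp add: sum.cartesian_product[symmetric] sum.swap[of _ E])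
qed

lemma edge_avg_Suc:
  "edge_avg E (Suc t) F = edge_avg E t (\<lambda>es. (1 / real (card E)) *\<^sub>R (\<Sum>e\<in>E. F (es(Suc t := e))))"
  by (simp add: edge_avg_def sum_edge_seqs_Suc scaleR_sum_right[symmetric])

lemma edge_avg_0: "edge_avg E 0 F = F (\<lambda>_. undefined)"
  by (simp add: edge_avg_def edge_seqs_def)

lemma edge_avg_const:
  fixes E :: "'n::finite set set"
  assumes "E \<noteq> {}"
  shows "edge_avg E t (\<lambda>_. c) = c"
  using assms by (simp add: edge_avg_def edge_seqs_def card_PiE sum_constant_scaleR)

lemma edge_avg_cong: "(\<And>es. es \<in> edge_seqs E t \<Longrightarrow> F es = G es) \<Longrightarrow> edge_avg E t F = edge_avg E t G"
  by (simp add: edge_avg_def)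

lemma edge_avg_mono:
  fixes F G :: "(nat \<Rightarrow> 'n set) \<Rightarrow> real"
  shows "(\<And>es. es \<in> edge_seqs E t \<Longrightarrow> F es \<le> G es) \<Longrightarrow> edge_avg E t F \<le> edge_avg E t G"
  unfolding edge_avg_def by (simp add: divide_right_mono sum_mono)

lemma edge_avg_add: "edge_avg E t (\<lambda>es. F es + G es) = edge_avg E t F + edge_avg E t G"
  by (simp add: edge_avg_def sum.distrib scaleR_add_right)

lemma edge_avg_linear: "linear f \<Longrightarrow> edge_avg E t (\<lambda>es. f (F es)) = f (edge_avg E t F)"
  by (simp add: edge_avg_def linear_scale linear_sum)

lemma edge_avg_mult_left: "edge_avg E t (\<lambda>es. c * F es) = c * edge_avg E t F"
  for F :: "(nat \<Rightarrow> 'n set) \<Rightarrow> real"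
  by (simp add: edge_avg_def real_scaleR_def sum_distrib_left mult.left_commute)

lemma norm_edge_avg_le: "norm (edge_avg E t F) \<le> edge_avg E t (\<lambda>es. norm (F es))"
  unfolding edge_avg_def by (simp add: divide_right_mono norm_sum)

lemma abs_edge_avg_diff_le:
  fixes E :: "'n::finite set set" and F :: "(nat \<Rightarrow> 'n set) \<Rightarrow> real"
  assumes "E \<noteq> {}"
  shows "\<bar>edge_avg E t F - c\<bar> \<le> edge_avg E t (\<lambda>es. \<bar>F es - c\<bar>)"
proof -
  have "edge_avg E t F - c = edge_avg E t (\<lambda>es. F es - c)"
    using edge_avg_add[of E t F "\<lambda>_. - c"] edge_avg_const[OF assms, of t "- c"] by simp
  then show ?thesis
    using norm_edge_avg_le[of E t "\<lambda>es. F es - c"] by simp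
qed

definition swap_values :: "'n set \<Rightarrow> ('n \<Rightarrow> 'a) \<Rightarrow> 'n \<Rightarrow> 'a" where
  "swap_values e Y l = (if l \<in> e then Y (the_elem (e - {l})) else Y l)"

primrec swap_walk :: "('n \<Rightarrow> 'a) \<Rightarrow> (nat \<Rightarrow> 'n set) \<Rightarrow> nat \<Rightarrow> 'n \<Rightarrow> 'a" where
  "swap_walk Y es 0 = Y"
| "swap_walk Y es (Suc s) = swap_values (es (Suc s)) (swap_walk Y es s)"

lemma swap_walk_fun_upd: "j \<le> t \<Longrightarrow> swap_walk Y (es(Suc t := e)) j = swap_walk Y es j"
  by (induction j) auto

lemma sum_swap_values:
  assumes "card e = 2"
  shows "(\<Sum>l\<in>UNIV. f (swap_values e Y l)) = (\<Sum>l\<in>(UNIV :: 'n::finite set). f (Y l))"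
proof -
  obtain a b where "a \<noteq> b" and e: "e = {a, b}"
    using assms by (auto simp: card_2_iff)
  then have "swap_values e Y = Y \<circ> Transposition.transpose a b"
    by (auto simp: swap_values_def fun_eq_iff insert_Diff_if transpose_def)
  then show ?thesis
    using sum.reindex_bij_betw[OF bij_transpose, of "\<lambda>l. f (Y l)" a b] by simp
qed

lemma sum_swap_walk:
  assumes "\<forall>e\<in>E. card e = 2" and "es \<in> edge_seqs E t" and "j \<le> t"
  shows "(\<Sum>l\<in>UNIV. f (swap_walk Y es j l)) = (\<Sum>l\<in>(UNIV :: 'n::finite set). f (Y l))"
  using assms(3)
proof (induction j)
  case (Suc j)
  then have "card (es (Suc j)) = 2"
    using assms(1,2) by (auto simp: edge_seqs_def)
  with Suc show ?case
    by (simp add: sum_swap_values)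
qed simp

lemma running_average_Suc:
  fixes C d :: real
  assumes "s = 0 \<Longrightarrow> C = 0"
  shows "(C + d) / real (Suc s) = (1 - 1 / real (Suc s)) * (C / real s) + 1 / real (Suc s) * d"
proof -
  have "C / real (Suc s) = (1 - 1 / real (Suc s)) * (C / real s)"
    using assms by (cases "s = 0") (auto simp: field_simps)
  then show ?thesis
    by (simp add: add_divide_distrib)
qed

lemma gotrim_state_rank_and_values:
  "fst (gotrim_state X \<alpha> es s) = (\<lambda>k. (\<Sum>j<s. if X k > swap_walk X es j k then 1 else 0) / real s)"
  "snd (snd (snd (gotrim_state X \<alpha> es s))) = swap_walk X es s"
proof (induction s)
  case (Suc s)
  have "(\<Sum>j<Suc s. if X k > swap_walk X es j k then 1 else 0) / real (Suc s)
      = (1 - 1 / real (Suc s)) * ((\<Sum>j<s. if X k > swap_walk X es j k then 1 else 0) / real s)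
        + 1 / real (Suc s) * (if X k > swap_walk X es s k then 1 else 0)" for k
    unfolding sum.lessThan_Suc by (rule running_average_Suc) simp
  with Suc show
    "fst (gotrim_state X \<alpha> es (Suc s))
       = (\<lambda>k. (\<Sum>j<Suc s. if X k > swap_walk X es j k then 1 else 0) / real (Suc s))"
    "snd (snd (snd (gotrim_state X \<alpha> es (Suc s)))) = swap_walk X es (Suc s)"
    by (cases "gotrim_state X \<alpha> es s";
        simp add: gotrim_step_def Let_def fun_eq_iff swap_values_def)+
qed simp_all

definition gorank_estimate :: "('n::finite \<Rightarrow> real) \<Rightarrow> (nat \<Rightarrow> 'n set) \<Rightarrow> nat \<Rightarrow> 'n \<Rightarrow> real" where
  "gorank_estimate X es t k =
     real CARD('n) * (\<Sum>j<t. if X k > swap_walk X es j k then 1 else 0) / real t + 1"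

lemma W_at_eq_trim_weight_gorank_estimate:
  fixes X :: "'n::finite \<Rightarrow> real"
  assumes "1 \<le> t"
  shows "W_at X \<alpha> es t k = trim_weight CARD('n) \<alpha> (gorank_estimate X es t k)"
proof -
  obtain s where "t = Suc s"
    using assms by (cases t) auto
  then show ?thesis
    using gotrim_state_rank_and_values(1)[of X \<alpha> es t]
    by (cases "gotrim_state X \<alpha> es s")
      (simp add: W_at_def gorank_estimate_def gotrim_step_def Let_def fun_eq_iff)
qed

section \<open>The gossip matrix\<close>

lemma quadratic_form_diff_scaleR:
  fixes P :: "'a::real_inner \<Rightarrow> 'a"
  assumes "linear P" and "x \<bullet> P y = y \<bullet> P x"
  shows "(a *\<^sub>R x - b *\<^sub>R y) \<bullet> P (a *\<^sub>R x - b *\<^sub>R y)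
    = a^2 * (x \<bullet> P x) - 2 * a * b * (x \<bullet> P y) + b^2 * (y \<bullet> P y)"
  using assms(2)
  by (simp add: linear_diff[OF assms(1)] linear_scale[OF assms(1)] inner_diff_left inner_diff_right
      power2_eq_square algebra_simps)

text \<open>Expanding \<open>0 \<le> u \<bullet> P u\<close> for \<open>u = \<parallel>P z\<parallel> z - \<parallel>z\<parallel> P z\<close> is the Cauchy-Schwarz argument for the
  semi-inner product \<open>(x, y) \<mapsto> x \<bullet> P y\<close>.\<close>
lemma norm_le_of_quadratic_form_bounds:
  fixes P :: "'a::real_inner \<Rightarrow> 'a"
  assumes "linear P" and "subspace S"
    and sym: "\<And>x y. x \<in> S \<Longrightarrow> y \<in> S \<Longrightarrow> x \<bullet> P y = y \<bullet> P x"
    and invariant: "\<And>x. x \<in> S \<Longrightarrow> P x \<in> S"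
    and nonneg: "\<And>y. y \<in> S \<Longrightarrow> 0 \<le> y \<bullet> P y"
    and upper: "\<And>y. y \<in> S \<Longrightarrow> y \<bullet> P y \<le> \<beta> * (y \<bullet> y)"
    and "z \<in> S"
  shows "norm (P z) \<le> \<beta> * norm z"
proof (cases "z = 0")
  case True
  then show ?thesis
    using linear_0[OF assms(1)] by simp
next
  case False
  define p where "p = P z"
  define a where "a = norm p"
  define b where "b = norm z"
  have "p \<in> S" and "b > 0" and "p \<bullet> p = a^2" and "z \<bullet> z = b^2"
    using invariant \<open>z \<in> S\<close> False by (simp_all add: p_def a_def b_def power2_norm_eq_inner)
  have "0 \<le> \<beta>"
    using order_trans[OF nonneg upper, OF \<open>z \<in> S\<close> \<open>z \<in> S\<close>] \<open>b > 0\<close> \<open>z \<bullet> z = b^2\<close>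
    by (simp add: zero_le_mult_iff)
  have "z \<bullet> P p = p \<bullet> p"
    using sym[OF \<open>z \<in> S\<close> \<open>p \<in> S\<close>] by (simp add: p_def)
  have "0 \<le> (a *\<^sub>R z - b *\<^sub>R p) \<bullet> P (a *\<^sub>R z - b *\<^sub>R p)"
    using assms(2) \<open>z \<in> S\<close> \<open>p \<in> S\<close> by (intro nonneg subspace_diff subspace_scale)
  also have "\<dots> = a^2 * (z \<bullet> P z) - 2 * a * b * a^2 + b^2 * (p \<bullet> P p)"
    using sym[OF \<open>z \<in> S\<close> \<open>p \<in> S\<close>] \<open>z \<bullet> P p = p \<bullet> p\<close> \<open>p \<bullet> p = a^2\<close>
    by (simp add: quadratic_form_diff_scaleR[OF assms(1)])
  also have "\<dots> \<le> a^2 * (\<beta> * b^2) - 2 * a * b * a^2 + b^2 * (\<beta> * a^2)"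
    using upper[OF \<open>z \<in> S\<close>] upper[OF \<open>p \<in> S\<close>] \<open>p \<bullet> p = a^2\<close> \<open>z \<bullet> z = b^2\<close>
    by (intro add_mono diff_right_mono mult_left_mono) simp_all
  finally have "0 \<le> 2 * a^2 * b * (\<beta> * b - a)"
    by (simp add: power2_eq_square algebra_simps)
  have "a \<le> \<beta> * b"
  proof (cases "a = 0")
    case False
    then have "0 < 2 * a^2 * b"
      using \<open>b > 0\<close> by simp
    with \<open>0 \<le> 2 * a^2 * b * (\<beta> * b - a)\<close> show ?thesis
      by (simp add: zero_le_mult_iff)
  qed (use \<open>b > 0\<close> \<open>0 \<le> \<beta>\<close> in simp)
  then show ?thesis
    by (simp add: a_def b_def p_def)
qed

lemma sum_edges_incident:
  fixes E :: "'n::finite set set"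
  assumes "simple_graph E"
  shows "(\<Sum>e\<in>E. if l \<in> e then g (the_elem (e - {l})) else 0)
    = (\<Sum>j\<in>UNIV. if {l, j} \<in> E then g j else 0)"
proof -
  have loopless: "j \<noteq> l" if "{l, j} \<in> E" for j
    using assms that by (force simp: simple_graph_def)
  have "{e \<in> E. l \<in> e} = (\<lambda>j. {l, j}) ` {j. {l, j} \<in> E}"
  proof (intro equalityI subsetI)
    fix e
    assume "e \<in> {e \<in> E. l \<in> e}"
    moreover from this obtain a b where "e = {a, b}"
      using assms by (auto simp: simple_graph_def card_2_iff)
    ultimately show "e \<in> (\<lambda>j. {l, j}) ` {j. {l, j} \<in> E}"
      by (auto simp: insert_commute)
  qed auto
  moreover have "inj_on (\<lambda>j. {l, j}) {j. {l, j} \<in> E}"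
    by (auto intro!: inj_onI simp: doubleton_eq_iff)
  ultimately have "(\<Sum>e\<in>{e \<in> E. l \<in> e}. g (the_elem (e - {l})))
      = (\<Sum>j | {l, j} \<in> E. g (the_elem ({l, j} - {l})))"
    by (simp add: sum.reindex)
  also have "\<dots> = (\<Sum>j | {l, j} \<in> E. g j)"
    using loopless by (intro sum.cong) (auto simp: insert_Diff_if)
  also have "\<dots> = (\<Sum>j\<in>UNIV. if {l, j} \<in> E then g j else 0)"
    by (subst sum.inter_filter[symmetric]) simp_all
  finally show ?thesis
    by (subst sum.inter_filter[symmetric]) simp_all
qed

definition gossip_matrix :: "'n::finite set set \<Rightarrow> real^'n^'n" where
  "gossip_matrix E = mat 1 - (1 / real (card E)) *\<^sub>R laplacian E"

definition gossip_rate :: "'n::finite set set \<Rightarrow> real" where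
  "gossip_rate E = second_smallest_eigenvalue (laplacian E) / real (card E)"

lemma gossip_matrix_mult: "gossip_matrix E *v x = x - (1 / real (card E)) *\<^sub>R (laplacian E *v x)"
  by (simp add: gossip_matrix_def matrix_vector_mult_diff_rdistrib scaleR_matrix_vector_assoc)

locale gossip_graph =
  fixes E :: "'n::finite set set"
  assumes simple: "simple_graph E" and connected: "connected_graph E"
    and non_bipartite: "\<not> bipartite E" and two_vertices: "2 \<le> CARD('n)"
begin

lemma card_edges_pos: "0 < card E"
proof -
  have "0 < CARD('n)"
    by simp
  then show ?thesis
    using card_le_card_edges[OF simple connected non_bipartite] by linarith
qed

lemma edges_nonempty: "E \<noteq> {}"
  using card_edges_pos by auto

lemma gossip_rate_pos: "0 < gossip_rate E"
  using laplacian_spectral_gap(1)[OF connected two_vertices] card_edges_pos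
  by (simp add: gossip_rate_def)

lemma gossip_rate_le_1: "gossip_rate E \<le> 1"
  using laplacian_spectral_gap(2)[OF connected two_vertices]
    card_le_card_edges[OF simple connected non_bipartite] card_edges_pos
  by (simp add: gossip_rate_def)

lemma norm_gossip_matrix_mult_le:
  assumes "x \<bullet> 1 = 0"
  shows "norm (gossip_matrix E *v x) \<le> (1 - gossip_rate E) * norm x"
proof (rule norm_le_of_quadratic_form_bounds[OF matrix_vector_mul_linear subspace_hyperplane2])
  let ?N = "real (card E)"
  have N: "real CARD('n) \<le> ?N" "0 < ?N"
    using card_le_card_edges[OF simple connected non_bipartite] card_edges_pos by auto
  have quadratic: "y \<bullet> (gossip_matrix E *v y) = y \<bullet> y - (y \<bullet> (laplacian E *v y)) / ?N" for y
    by (simp add: gossip_matrix_mult inner_diff_right)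
  show "x \<bullet> (gossip_matrix E *v y) = y \<bullet> (gossip_matrix E *v x)" for x y
    using laplacian_symmetric[of x E y]
    by (simp add: gossip_matrix_mult inner_diff_right inner_commute)
  show "gossip_matrix E *v y \<in> {x. x \<bullet> 1 = 0}" if "y \<in> {x. x \<bullet> 1 = 0}" for y
    using that one_inner_laplacian[of E y]
    by (simp add: gossip_matrix_mult inner_diff_left inner_diff_right inner_commute)
  show "0 \<le> y \<bullet> (gossip_matrix E *v y)" for y
  proof -
    have "y \<bullet> (laplacian E *v y) \<le> ?N * (y \<bullet> y)"
      using laplacian_quadratic_le[of y E] mult_right_mono[OF N(1), of "y \<bullet> y"] by simp
    then show ?thesis
      using N(2) by (simp add: quadratic divide_le_eq mult.commute)
  qed
  show "y \<bullet> (gossip_matrix E *v y) \<le> (1 - gossip_rate E) * (y \<bullet> y)"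
    if "y \<in> {x. x \<bullet> 1 = 0}" for y
  proof -
    have "gossip_rate E * (y \<bullet> y) \<le> (y \<bullet> (laplacian E *v y)) / ?N"
      using divide_right_mono[OF laplacian_spectral_gap(3)[OF connected two_vertices]
          less_imp_le[OF N(2)]] that
      by (simp add: gossip_rate_def)
    then show ?thesis
      by (simp add: quadratic algebra_simps)
  qed
qed (use assms in simp)

lemma gossip_matrix_swap_average:
  "(1 / real (card E)) *\<^sub>R (\<Sum>e\<in>E. \<chi> l. f (swap_values e Y l)) = gossip_matrix E *v (\<chi> l. f (Y l))"
proof -
  have sum_swaps: "(\<Sum>e\<in>E. f (swap_values e Y l))
      = real (card E) * f (Y l) - (\<Sum>j\<in>UNIV. if {l, j} \<in> E then f (Y l) - f (Y j) else 0)" for l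
  proof -
    have "(\<Sum>e\<in>E. f (swap_values e Y l))
        = (\<Sum>e\<in>E. f (Y l) + (if l \<in> e then f (Y (the_elem (e - {l}))) - f (Y l) else 0))"
      by (intro sum.cong) (auto simp: swap_values_def)
    also have "\<dots> = real (card E) * f (Y l) + (\<Sum>j\<in>UNIV. if {l, j} \<in> E then f (Y j) - f (Y l) else 0)"
      by (simp add: sum.distrib sum_edges_incident[OF simple, of l "\<lambda>j. f (Y j) - f (Y l)"])
    also have "(\<Sum>j\<in>UNIV. if {l, j} \<in> E then f (Y j) - f (Y l) else 0)
        = - (\<Sum>j\<in>UNIV. if {l, j} \<in> E then f (Y l) - f (Y j) else 0)"
      by (subst sum_negf[symmetric]) (intro sum.cong; simp)
    finally show ?thesis
      by simp
  qed
  have "((1 / real (card E)) *\<^sub>R (\<Sum>e\<in>E. \<chi> l. f (swap_values e Y l))) $ l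
      = f (Y l) - (\<Sum>j\<in>UNIV. if {l, j} \<in> E then f (Y l) - f (Y j) else 0) / real (card E)"
    for l
    using card_edges_pos edges_nonempty by (simp add: sum_swaps diff_divide_distrib)
  then show ?thesis
    by (simp add: vec_eq_iff gossip_matrix_mult laplacian_mult_nth cong: if_cong)
qed

end

section \<open>Second moment of the GoRank estimate\<close>

locale centred_swap_walk = gossip_graph E for E :: "'n::finite set set" +
  fixes X :: "'n \<Rightarrow> real" and f :: "real \<Rightarrow> real" and k :: 'n
  assumes centred: "(\<Sum>l\<in>UNIV. f (X l)) = 0"
begin

definition profile :: "(nat \<Rightarrow> 'n set) \<Rightarrow> nat \<Rightarrow> real^'n" where
  "profile es j = (\<chi> l. f (swap_walk X es j l))"

definition partial_sum :: "(nat \<Rightarrow> 'n set) \<Rightarrow> nat \<Rightarrow> real" where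
  "partial_sum es t = (\<Sum>j<t. f (swap_walk X es j k))"

definition energy :: real where
  "energy = (\<Sum>l\<in>UNIV. (f (X l))^2)"

definition cross_moment :: "nat \<Rightarrow> real^'n" where
  "cross_moment t = edge_avg E t (\<lambda>es. partial_sum es t *\<^sub>R profile es t)"

lemma energy_nonneg: "0 \<le> energy"
  by (simp add: energy_def sum_nonneg)

lemma profile_nth: "profile es j $ k = f (swap_walk X es j k)"
  by (simp add: profile_def)

lemma profile_fun_upd:
  "profile (es(Suc t := e)) (Suc t) = (\<chi> l. f (swap_values e (swap_walk X es t) l))"
  by (simp add: profile_def swap_walk_fun_upd)

lemma partial_sum_Suc: "partial_sum es (Suc t) = partial_sum es t + f (swap_walk X es t k)"
  by (simp add: partial_sum_def)

lemma partial_sum_fun_upd: "partial_sum (es(Suc t := e)) (Suc t) = partial_sum es (Suc t)"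
  by (simp add: partial_sum_def swap_walk_fun_upd)

context
  fixes es and t j
  assumes es: "es \<in> edge_seqs E t" and "j \<le> t"
begin

lemma sum_profile: "(\<Sum>l\<in>UNIV. g (f (swap_walk X es j l))) = (\<Sum>l\<in>UNIV. g (f (X l)))"
  using simple es \<open>j \<le> t\<close> by (intro sum_swap_walk) (auto simp: simple_graph_def)

lemma profile_inner_one: "profile es j \<bullet> 1 = 0"
  using sum_profile[of id] centred by (simp add: profile_def inner_vec_def)

lemma norm_profile: "norm (profile es j) = sqrt energy"
  using sum_profile[of "\<lambda>y. y^2"] by (simp add: profile_def energy_def norm_vec_def L2_set_def)

lemma swap_walk_value_sq_le_energy: "(f (swap_walk X es j k))^2 \<le> energy"
proof -
  have "\<bar>f (swap_walk X es j k)\<bar>^2 \<le> (sqrt energy)^2"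
    using component_le_norm_cart[of "profile es j" k]
    by (intro power_mono) (simp_all add: profile_nth norm_profile)
  then show ?thesis
    using energy_nonneg by simp
qed

lemma swap_walk_value_mult_norm_profile_le:
  "\<bar>f (swap_walk X es j k)\<bar> * norm (profile es j) \<le> energy"
  using component_le_norm_cart[of "profile es j" k] energy_nonneg
  by (simp add: profile_nth norm_profile
      mult_right_mono[of _ "sqrt energy" "sqrt energy", simplified])

end

lemma cross_moment_Suc:
  "cross_moment (Suc t)
     = gossip_matrix E *v edge_avg E t (\<lambda>es. partial_sum es (Suc t) *\<^sub>R profile es t)"
proof -
  have "cross_moment (Suc t) = edge_avg E t (\<lambda>es. partial_sum es (Suc t) *\<^sub>R
      ((1 / real (card E)) *\<^sub>R (\<Sum>e\<in>E. \<chi> l. f (swap_values e (swap_walk X es t) l))))"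
    by (simp add: cross_moment_def edge_avg_Suc partial_sum_fun_upd profile_fun_upd
        scaleR_sum_right)
  also have "\<dots> = edge_avg E t (\<lambda>es. gossip_matrix E *v (partial_sum es (Suc t) *\<^sub>R profile es t))"
    by (simp add: gossip_matrix_swap_average profile_def matrix_vector_mult_scaleR)
  also have "\<dots> = gossip_matrix E *v edge_avg E t (\<lambda>es. partial_sum es (Suc t) *\<^sub>R profile es t)"
    by (rule edge_avg_linear[OF matrix_vector_mul_linear])
  finally show ?thesis .
qed

lemma norm_cross_moment_le: "norm (cross_moment t) \<le> energy * (1 - gossip_rate E) / gossip_rate E"
proof (induction t)
  case 0
  show ?case
    using energy_nonneg gossip_rate_pos gossip_rate_le_1
    by (simp add: cross_moment_def edge_avg_0 partial_sum_def)
next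
  case (Suc t)
  let ?bound = "energy * (1 - gossip_rate E) / gossip_rate E"
  define D where "D = edge_avg E t (\<lambda>es. f (swap_walk X es t k) *\<^sub>R profile es t)"
  have split: "edge_avg E t (\<lambda>es. partial_sum es (Suc t) *\<^sub>R profile es t) = cross_moment t + D"
    by (simp add: cross_moment_def D_def partial_sum_Suc scaleR_add_left edge_avg_add)
  have "(cross_moment t + D) \<bullet> 1 = edge_avg E t (\<lambda>es. (partial_sum es (Suc t) *\<^sub>R profile es t) \<bullet> 1)"
    unfolding split[symmetric]
    by (rule edge_avg_linear[OF bounded_linear.linear[OF bounded_linear_inner_left], symmetric])
  also have "\<dots> = edge_avg E t (\<lambda>_. 0)"
    by (intro edge_avg_cong) (simp add: profile_inner_one)
  finally have "(cross_moment t + D) \<bullet> 1 = 0"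
    by (simp add: edge_avg_def)
  have "norm D \<le> edge_avg E t (\<lambda>_. energy)"
    unfolding D_def
    by (rule order_trans[OF norm_edge_avg_le edge_avg_mono])
      (simp add: swap_walk_value_mult_norm_profile_le)
  then have "norm (cross_moment t + D) \<le> ?bound + energy"
    using Suc.IH norm_triangle_ineq[of "cross_moment t" D]
    by (simp add: edge_avg_const[OF edges_nonempty])
  have "norm (cross_moment (Suc t)) \<le> (1 - gossip_rate E) * norm (cross_moment t + D)"
    unfolding cross_moment_Suc split by (rule norm_gossip_matrix_mult_le) fact
  also have "\<dots> \<le> (1 - gossip_rate E) * (?bound + energy)"
    using gossip_rate_le_1 \<open>norm (cross_moment t + D) \<le> ?bound + energy\<close>
    by (intro mult_left_mono) simp_all
  also have "\<dots> = ?bound"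
    using gossip_rate_pos by (simp add: field_simps)
  finally show ?case .
qed

lemma second_moment_Suc:
  "edge_avg E (Suc t) (\<lambda>es. (partial_sum es (Suc t))^2)
     = edge_avg E t (\<lambda>es. (partial_sum es t)^2) + 2 * cross_moment t $ k
       + edge_avg E t (\<lambda>es. (f (swap_walk X es t k))^2)"
proof -
  have "edge_avg E (Suc t) (\<lambda>es. (partial_sum es (Suc t))^2)
      = edge_avg E t (\<lambda>es. (partial_sum es t)^2 + (2 * (partial_sum es t * f (swap_walk X es t k))
          + (f (swap_walk X es t k))^2))"
    unfolding edge_avg_Suc partial_sum_fun_upd using card_edges_pos edges_nonempty
    by (simp add: partial_sum_Suc power2_eq_square algebra_simps)
  moreover have "edge_avg E t (\<lambda>es. partial_sum es t * f (swap_walk X es t k)) = cross_moment t $ k"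
    unfolding cross_moment_def
    by (subst edge_avg_linear[OF bounded_linear.linear[OF bounded_linear_vec_nth], symmetric])
      (simp add: profile_nth)
  ultimately show ?thesis
    by (simp add: edge_avg_add edge_avg_mult_left)
qed

lemma second_moment_le:
  "edge_avg E t (\<lambda>es. (partial_sum es t)^2) \<le> 3 * real t * energy / gossip_rate E"
proof -
  define c where "c = gossip_rate E"
  define B where "B = energy * (2 * (1 - c) / c + 1)"
  have "edge_avg E t (\<lambda>es. (partial_sum es t)^2) \<le> real t * B"
  proof (induction t)
    case 0
    show ?case
      by (simp add: edge_avg_0 partial_sum_def)
  next
    case (Suc t)
    have "cross_moment t $ k \<le> energy * (1 - c) / c"
      using component_le_norm_cart[of "cross_moment t" k] norm_cross_moment_le[of t]
      by (simp add: c_def)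
    moreover have "edge_avg E t (\<lambda>es. (f (swap_walk X es t k))^2) \<le> energy"
      using edge_avg_mono[of E t _ "\<lambda>_. energy"] swap_walk_value_sq_le_energy
      by (simp add: edge_avg_const[OF edges_nonempty])
    moreover have "B = 2 * (energy * (1 - c) / c) + energy"
      by (simp add: B_def algebra_simps)
    moreover have "real (Suc t) * B = real t * B + B"
      by (simp add: algebra_simps)
    ultimately show ?case
      using Suc.IH unfolding second_moment_Suc by linarith
  qed
  also have "\<dots> \<le> real t * (energy * (3 / c))"
    using gossip_rate_pos gossip_rate_le_1 energy_nonneg
    by (intro mult_left_mono) (auto simp: B_def c_def field_simps)
  finally show ?thesis
    by (simp add: c_def mult.commute mult.left_commute)
qed

end

lemma gorank_estimate_error:
  fixes X :: "'n::finite \<Rightarrow> real" and k :: 'n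
  assumes "1 \<le> t"
  defines "u \<equiv> (real (obs_rank X k) - 1) / real CARD('n)"
  shows "gorank_estimate X es t k - real (obs_rank X k)
    = real CARD('n) / real t * (\<Sum>j<t. (if X k > swap_walk X es j k then 1 else 0) - u)"
proof -
  have "real (obs_rank X k) = 1 + real CARD('n) * u"
    by (simp add: u_def)
  then show ?thesis
    using assms(1) by (simp add: gorank_estimate_def sum_subtractf field_simps)
qed

lemma (in gossip_graph) gorank_mean_square_error_le:
  fixes X :: "'n \<Rightarrow> real" and k :: 'n
  assumes "1 \<le> t"
  defines "r \<equiv> real (obs_rank X k)"
  defines "u \<equiv> (r - 1) / real CARD('n)"
  shows "edge_avg E t (\<lambda>es. (gorank_estimate X es t k - r)^2)
           \<le> 3 / (gossip_rate E * real t) * (real CARD('n) ^ 3 * (u * (1 - u)))"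
proof -
  define n where "n = real CARD('n)"
  define below where "below y = (if X k > y then 1 else 0 :: real)" for y
  have "n > 0"
    by (simp add: n_def)
  have rank: "(\<Sum>l\<in>UNIV. below (X l)) = n * u"
    using \<open>n > 0\<close> by (simp add: below_def sum.If_cases r_def u_def n_def obs_rank_def)
  interpret centred_swap_walk E X "\<lambda>y. below y - u" k
    by unfold_locales (simp add: sum_subtractf rank n_def)
  have "energy = n * (u * (1 - u))"
  proof -
    have "energy = (\<Sum>l\<in>UNIV. (1 - 2 * u) * below (X l) + u^2)"
      unfolding energy_def
      by (intro sum.cong) (simp_all add: below_def power2_eq_square algebra_simps)
    also have "\<dots> = (1 - 2 * u) * (n * u) + n * u^2"
      by (simp add: sum.distrib sum_distrib_left[symmetric] rank n_def)
    finally show ?thesis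
      by (simp add: power2_eq_square algebra_simps)
  qed
  have error: "gorank_estimate X es t k - r = n / real t * partial_sum es t" for es
    unfolding partial_sum_def using gorank_estimate_error[OF \<open>1 \<le> t\<close>, of X es k]
    by (simp add: below_def r_def u_def n_def)
  have "edge_avg E t (\<lambda>es. (gorank_estimate X es t k - r)^2)
      = (n / real t)^2 * edge_avg E t (\<lambda>es. (partial_sum es t)^2)"
    by (simp only: error power_mult_distrib edge_avg_mult_left)
  also have "\<dots> \<le> (n / real t)^2 * (3 * real t * energy / gossip_rate E)"
    by (intro mult_left_mono second_moment_le) simp
  also have "\<dots> = 3 / (gossip_rate E * real t) * (n ^ 3 * (u * (1 - u)))"
    using \<open>1 \<le> t\<close> gossip_rate_pos unfolding \<open>energy = n * (u * (1 - u))\<close>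
    by (simp add: power2_eq_square power3_eq_cube field_simps)
  finally show ?thesis
    by (simp add: n_def)
qed

section \<open>Trimmed weights\<close>

lemma of_int_ne_of_int_plus_half: "real_of_int a \<noteq> real_of_int b + 1/2"
proof
  assume "real_of_int a = real_of_int b + 1/2"
  then have "2 * a = 2 * b + 1"
    by linarith
  then show False
    by presburger
qed

lemma trim_weight_height_le:
  fixes n :: nat
  assumes "0 < \<alpha>" and "\<alpha> < 1/2" and "0 < n"
  defines "m \<equiv> real (nat \<lfloor>\<alpha> * real n\<rfloor>)"
  shows "0 \<le> real n / (real n - 2 * m)" and "real n / (real n - 2 * m) \<le> 1 / (1 - 2 * \<alpha>)"
proof -
  have "m \<le> \<alpha> * real n"
    using assms(1) by (simp add: m_def)
  then have "real n * (1 - 2 * \<alpha>) \<le> real n - 2 * m" and "0 < real n * (1 - 2 * \<alpha>)"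
    using assms(2,3) by (auto simp: algebra_simps)
  then show "0 \<le> real n / (real n - 2 * m)" and "real n / (real n - 2 * m) \<le> 1 / (1 - 2 * \<alpha>)"
    using assms(3) frac_le[of "real n" "real n" "real n * (1 - 2 * \<alpha>)"] by auto
qed

lemma trim_weight_diff_le:
  fixes n r :: nat and \<alpha> x :: real
  assumes "0 < \<alpha>" and "\<alpha> < 1/2" and "0 < n"
  defines "m \<equiv> real (nat \<lfloor>\<alpha> * real n\<rfloor>)"
  defines "\<gamma> \<equiv> min \<bar>real r - (m + 1/2)\<bar> \<bar>real r - (real n - m + 1/2)\<bar>"
  shows "\<bar>trim_weight n \<alpha> x - trim_weight n \<alpha> (real r)\<bar> \<le> (x - real r)^2 / (\<gamma>^2 * (1 - 2 * \<alpha>))"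
proof -
  define W where "W = real n / (real n - 2 * m)"
  have "0 \<le> W" and "W \<le> 1 / (1 - 2 * \<alpha>)"
    using trim_weight_height_le[OF assms(1-3)] by (simp_all add: W_def m_def)
  have "0 < \<gamma>"
    using of_int_ne_of_int_plus_half[of "int r" "\<lfloor>\<alpha> * real n\<rfloor>"]
      of_int_ne_of_int_plus_half[of "int r" "int n - \<lfloor>\<alpha> * real n\<rfloor>"] assms(1)
    by (auto simp: \<gamma>_def m_def)
  have trim_weight: "trim_weight n \<alpha> y = (if m + 1/2 \<le> y \<and> y \<le> real n - m + 1/2 then W else 0)"
    for y
    by (simp add: trim_weight_def Let_def m_def W_def)
  show ?thesis
  proof (cases "m + 1/2 \<le> x \<and> x \<le> real n - m + 1/2 \<longleftrightarrow> m + 1/2 \<le> r \<and> r \<le> real n - m + 1/2")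
    case True
    then show ?thesis
      using assms(2) by (simp add: trim_weight)
  next
    case False
    then have "\<gamma> \<le> \<bar>x - real r\<bar>"
      by (auto simp: \<gamma>_def)
    then have "1 \<le> (x - real r)^2 / \<gamma>^2"
      using power_mono[of \<gamma> "\<bar>x - real r\<bar>" 2] \<open>0 < \<gamma>\<close> by simp
    then have "1 / (1 - 2 * \<alpha>) \<le> (x - real r)^2 / \<gamma>^2 / (1 - 2 * \<alpha>)"
      using assms(2) by (intro divide_right_mono) auto
    moreover have "\<bar>trim_weight n \<alpha> x - trim_weight n \<alpha> (real r)\<bar> = W"
      using False \<open>0 \<le> W\<close> by (auto simp: trim_weight)
    ultimately show ?thesis
      using \<open>W \<le> 1 / (1 - 2 * \<alpha>)\<close> by (simp add: divide_divide_eq_left)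
  qed
qed

theorem lemma1:
  fixes E :: "('n::finite) set set" and X :: "'n \<Rightarrow> real" and \<alpha> :: real
    and k :: 'n and t :: nat
  assumes "CARD('n) \<ge> 2"
    and "simple_graph E" and "connected_graph E" and "\<not> bipartite E"
    and "inj X"
    and "0 < \<alpha>" and "\<alpha> < 1/2"
    and "t \<ge> 1"
  shows "let n = CARD('n); m = real (nat \<lfloor>\<alpha> * real n\<rfloor>);
             r = real (obs_rank X k);
             c = second_smallest_eigenvalue (laplacian E) / real (card E);
             u = (r - 1) / real n;
             \<sigma>sq = real n ^ 3 * (u * (1 - u));
             a = m + 1/2; b = real n - m + 1/2;
             \<gamma> = min \<bar>r - a\<bar> \<bar>r - b\<bar>
         in \<bar>expected_W E X \<alpha> t k - trim_weight n \<alpha> r\<bar>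
              \<le> 3 / (c * real t) * (\<sigma>sq / (\<gamma>^2 * (1 - 2 * \<alpha>)))"
proof -
  interpret gossip_graph E
    using assms(1-4) by unfold_locales
  let ?n = "CARD('n)" and ?r = "real (obs_rank X k)"
  let ?w = "trim_weight ?n \<alpha>" and ?R = "\<lambda>es. gorank_estimate X es t k"
  let ?d = "(min \<bar>?r - (real (nat \<lfloor>\<alpha> * real ?n\<rfloor>) + 1/2)\<bar>
      \<bar>?r - (real ?n - real (nat \<lfloor>\<alpha> * real ?n\<rfloor>) + 1/2)\<bar>)^2 * (1 - 2 * \<alpha>)"
  let ?u = "(?r - 1) / real ?n"
  have "\<bar>expected_W E X \<alpha> t k - ?w ?r\<bar> \<le> edge_avg E t (\<lambda>es. \<bar>?w (?R es) - ?w ?r\<bar>)"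
    unfolding expected_W_eq_edge_avg W_at_eq_trim_weight_gorank_estimate[OF assms(8)]
    by (rule abs_edge_avg_diff_le[OF edges_nonempty])
  also have "\<dots> \<le> edge_avg E t (\<lambda>es. 1 / ?d * (?R es - ?r)^2)"
    using trim_weight_diff_le[OF assms(6,7)] by (intro edge_avg_mono) simp
  also have "\<dots> = 1 / ?d * edge_avg E t (\<lambda>es. (?R es - ?r)^2)"
    by (rule edge_avg_mult_left)
  also have "\<dots> \<le> 1 / ?d * (3 / (gossip_rate E * real t) * (real ?n ^ 3 * (?u * (1 - ?u))))"
    using assms(7) by (intro mult_left_mono gorank_mean_square_error_le assms(8)) simp
  also have "\<dots> = 3 / (gossip_rate E * real t) * (real ?n ^ 3 * (?u * (1 - ?u)) / ?d)"
    by simp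
  finally show ?thesis
    unfolding Let_def gossip_rate_def[symmetric] .
qed

end
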